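(* Let $(X,d)$ be a complete metric space, let $\alpha\in[0,1)$, let $T:X\to X$, and let $F:(0,\infty)\to\mathbb{R}$ be such that (1) $F$ is nondecreasing; (2) $F(s)>0$ for all $s>0$; (3) for all $x,y\in X$ with $Tx\neq Ty$, $F(d(Tx,Ty))\le\alpha F(d(x,y))$. Then $T$ is a Picard operator.
   Context: $T$ is a Picard operator if $T$ has a unique fixed point $u\in X$ and for every $x\in X$ the sequence $(T^nx)_{n\in\mathbb{N}}$ converges to $u$. *)

theory Defs
  imports "HOL-Analysis.Analysis"
begin

definition picard_operator :: "('a::metric_space \<Rightarrow> 'a) \<Rightarrow> bool" where
  "picard_operator T \<longleftrightarrow>
     (\<exists>u. T u = u \<and> (\<forall>v. T v = v \<longrightarrow> v = u) \<and>
          (\<forall>x. (\<lambda>n. (T ^^ n) x) \<longlonglongrightarrow> u))"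

end

theory Submission
  imports Defs
begin

text \<open>Iterating the F-contraction condition gives \<open>F (d(T\<^sup>n x, T\<^sup>n y)) \<le> \<alpha>\<^sup>n F (d(x, y))\<close>,
  and since F is monotone and positive this forces \<open>d(T\<^sup>n p, T\<^sup>n q) \<rightarrow> 0\<close> uniformly on pairs
  at bounded distance; in particular T is nonexpansive, hence continuous. Uniform asymptotic
  contraction makes every orbit Cauchy: choose \<open>j\<close> with \<open>d(T\<^sup>j p, T\<^sup>j q) < \<epsilon>/2\<close> whenever
  \<open>d(p, q) < \<epsilon>\<close>, and \<open>N\<close> beyond which consecutive orbit points are \<open>\<epsilon>/(2j)\<close>-close; then the
  orbit from \<open>N\<close> on stays in the \<open>\<epsilon>\<close>-ball around each of its points, by strong induction in
  blocks of \<open>j\<close> steps. The limit of an orbit is fixed by continuity, and two fixed points are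
  at distance \<open>d(T\<^sup>n u, T\<^sup>n v) \<rightarrow> 0\<close>.\<close>

definition uniformly_asymptotically_contractive :: "('a::metric_space \<Rightarrow> 'a) \<Rightarrow> bool" where
  "uniformly_asymptotically_contractive T \<longleftrightarrow>
     (\<forall>B e. 0 < e \<longrightarrow>
        (\<forall>\<^sub>F n in sequentially. \<forall>p q. dist p q \<le> B \<longrightarrow> dist ((T ^^ n) p) ((T ^^ n) q) < e))"

lemma uniformly_asymptotically_contractiveD:
  assumes "uniformly_asymptotically_contractive T" and "0 < e"
  obtains N where "\<And>n p q. N \<le> n \<Longrightarrow> dist p q \<le> B \<Longrightarrow> dist ((T ^^ n) p) ((T ^^ n) q) < e"
  using assms unfolding uniformly_asymptotically_contractive_def eventually_sequentially by meson

lemma dist_le_sum_of_steps: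
  fixes X :: "nat \<Rightarrow> 'a::metric_space"
  assumes "\<And>i. i < k \<Longrightarrow> dist (X (n + i)) (X (Suc (n + i))) \<le> \<delta>"
  shows "dist (X n) (X (n + k)) \<le> real k * \<delta>"
  using assms
proof (induction k)
  case (Suc k)
  have "dist (X n) (X (n + Suc k)) \<le> dist (X n) (X (n + k)) + dist (X (n + k)) (X (Suc (n + k)))"
    by (simp add: dist_triangle)
  also have "\<dots> \<le> real k * \<delta> + \<delta>"
    using Suc by (intro add_mono) auto
  finally show ?case
    by (simp add: algebra_simps)
qed simp

lemma dist_less_if_small_steps_and_shift_contracts:
  fixes X :: "nat \<Rightarrow> 'a::metric_space"
  assumes "0 < \<epsilon>" and "0 < j" and "real j * \<delta> \<le> \<epsilon> / 2"
    and step: "\<And>k. N \<le> k \<Longrightarrow> dist (X k) (X (Suc k)) < \<delta>"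
    and shift: "\<And>k l. dist (X k) (X l) < \<epsilon> \<Longrightarrow> dist (X (k + j)) (X (l + j)) < \<epsilon> / 2"
    and "N \<le> n"
  shows "n \<le> m \<Longrightarrow> dist (X n) (X m) < \<epsilon>"
proof (induction m rule: less_induct)
  case (less m)
  have "0 \<le> \<delta>"
    using step[of N] zero_le_dist[of "X N" "X (Suc N)"] by linarith
  have block: "dist (X n) (X (n + k)) \<le> \<epsilon> / 2" if "k \<le> j" for k
  proof -
    have "dist (X n) (X (n + k)) \<le> real k * \<delta>"
      using step \<open>N \<le> n\<close> by (intro dist_le_sum_of_steps) (simp add: less_imp_le)
    also have "\<dots> \<le> real j * \<delta>"
      using that \<open>0 \<le> \<delta>\<close> by (intro mult_right_mono) simp_all
    finally show ?thesis
      using assms(3) by linarith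
  qed
  show ?case
  proof (cases "m < n + j")
    case True
    then have "dist (X n) (X (n + (m - n))) \<le> \<epsilon> / 2"
      by (intro block) simp
    then show ?thesis
      using less.prems \<open>0 < \<epsilon>\<close> by simp
  next
    case False
    then have "dist (X n) (X (m - j)) < \<epsilon>"
      using less.IH[of "m - j"] less.prems \<open>0 < j\<close> by simp
    then have "dist (X (n + j)) (X (m - j + j)) < \<epsilon> / 2"
      by (rule shift)
    then have "dist (X (n + j)) (X m) < \<epsilon> / 2"
      using False by simp
    moreover have "dist (X n) (X m) \<le> dist (X n) (X (n + j)) + dist (X (n + j)) (X m)"
      by (rule dist_triangle)
    ultimately show ?thesis
      using block[of j] by simp
  qed
qed

lemma Cauchy_orbit_if_uniformly_asymptotically_contractive:
  assumes "uniformly_asymptotically_contractive T"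
  shows "Cauchy (\<lambda>n. (T ^^ n) x)"
proof (rule metric_CauchyI)
  fix \<epsilon> :: real
  assume "0 < \<epsilon>"
  define X where "X n = (T ^^ n) x" for n
  obtain N\<^sub>1 where N\<^sub>1: "\<And>n p q. N\<^sub>1 \<le> n \<Longrightarrow> dist p q \<le> \<epsilon> \<Longrightarrow> dist ((T ^^ n) p) ((T ^^ n) q) < \<epsilon> / 2"
    using uniformly_asymptotically_contractiveD[OF assms half_gt_zero[OF \<open>0 < \<epsilon>\<close>]] by blast
  define j where "j = Suc N\<^sub>1"
  define \<delta> where "\<delta> = \<epsilon> / (2 * real j)"
  have "0 < \<delta>" "real j * \<delta> = \<epsilon> / 2"
    using \<open>0 < \<epsilon>\<close> by (simp_all add: \<delta>_def j_def field_simps)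
  obtain N where N: "\<And>n p q. N \<le> n \<Longrightarrow> dist p q \<le> dist x (T x) \<Longrightarrow> dist ((T ^^ n) p) ((T ^^ n) q) < \<delta>"
    using uniformly_asymptotically_contractiveD[OF assms \<open>0 < \<delta>\<close>] by blast
  have step: "dist (X n) (X (Suc n)) < \<delta>" if "N \<le> n" for n
    using N[OF that order_refl] by (simp add: X_def funpow_swap1)
  have shift: "dist (X (k + j)) (X (l + j)) < \<epsilon> / 2" if "dist (X k) (X l) < \<epsilon>" for k l
  proof -
    have "(T ^^ j) (X i) = X (i + j)" for i
      unfolding X_def by (metis add.commute comp_apply funpow_add)
    then show ?thesis
      using N\<^sub>1[of j "X k" "X l"] that by (simp add: j_def)
  qed
  have close: "dist (X n) (X m) < \<epsilon>" if "N \<le> n" "n \<le> m" for n m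
    using dist_less_if_small_steps_and_shift_contracts[OF \<open>0 < \<epsilon>\<close> _ _ step shift] that
      \<open>real j * \<delta> = \<epsilon> / 2\<close> by (simp add: j_def)
  show "\<exists>M. \<forall>m\<ge>M. \<forall>n\<ge>M. dist ((T ^^ m) x) ((T ^^ n) x) < \<epsilon>"
  proof (intro exI allI impI)
    fix m n
    assume "N \<le> m" "N \<le> n"
    then show "dist ((T ^^ m) x) ((T ^^ n) x) < \<epsilon>"
      using close[of m n] close[of n m] by (cases "m \<le> n") (auto simp: X_def dist_commute)
  qed
qed

lemma fixed_point_unique_if_uniformly_asymptotically_contractive:
  assumes "uniformly_asymptotically_contractive T" and "T u = u" and "T v = v"
  shows "u = v"
proof -
  have "dist u v < e" if "0 < e" for e
  proof -
    obtain N where N: "\<And>n p q. N \<le> n \<Longrightarrow> dist p q \<le> dist u v \<Longrightarrow> dist ((T ^^ n) p) ((T ^^ n) q) < e"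
      using uniformly_asymptotically_contractiveD[OF assms(1) \<open>0 < e\<close>] by blast
    have "(T ^^ N) u = u" "(T ^^ N) v = v"
      using assms(2,3) by (induction N) simp_all
    then show ?thesis
      using N[of N u v] by simp
  qed
  from this[of "dist u v"] show ?thesis
    by (metis less_irrefl zero_less_dist_iff)
qed

lemma fixed_point_if_orbit_tendsto:
  fixes T :: "'a::metric_space \<Rightarrow> 'a"
  assumes "continuous_on UNIV T" and "(\<lambda>n. (T ^^ n) x) \<longlonglongrightarrow> u"
  shows "T u = u"
proof (rule LIMSEQ_unique[of "\<lambda>n. T ((T ^^ n) x)"])
  have "isCont T u"
    using assms(1) by (simp add: continuous_on_eq_continuous_at)
  then show "(\<lambda>n. T ((T ^^ n) x)) \<longlonglongrightarrow> T u"
    using assms(2) by (rule isCont_tendsto_compose)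
  show "(\<lambda>n. T ((T ^^ n) x)) \<longlonglongrightarrow> u"
    using LIMSEQ_Suc[OF assms(2)] by (simp only: funpow.simps comp_apply)
qed

lemma picard_operator_if_uniformly_asymptotically_contractive:
  fixes T :: "'a::{metric_space, complete_space} \<Rightarrow> 'a"
  assumes "continuous_on UNIV T" and "uniformly_asymptotically_contractive T"
  shows "picard_operator T"
proof -
  have orbit_tendsto: "\<exists>u. (\<lambda>n. (T ^^ n) x) \<longlonglongrightarrow> u" for x
    using Cauchy_orbit_if_uniformly_asymptotically_contractive[OF assms(2)]
    by (simp add: Cauchy_convergent_iff convergent_def)
  obtain u where u: "(\<lambda>n. (T ^^ n) undefined) \<longlonglongrightarrow> u"
    using orbit_tendsto by blast
  have fixed: "T v = v" if "(\<lambda>n. (T ^^ n) x) \<longlonglongrightarrow> v" for x v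
    using fixed_point_if_orbit_tendsto[OF assms(1) that] .
  have unique: "v = u" if "T v = v" for v
    using fixed_point_unique_if_uniformly_asymptotically_contractive[OF assms(2) that fixed[OF u]] .
  show ?thesis
    unfolding picard_operator_def
  proof (intro exI conjI allI impI)
    show "T u = u"
      using fixed[OF u] .
    show "v = u" if "T v = v" for v
      using unique[OF that] .
    show "(\<lambda>n. (T ^^ n) x) \<longlonglongrightarrow> u" for x
    proof -
      obtain w where w: "(\<lambda>n. (T ^^ n) x) \<longlonglongrightarrow> w"
        using orbit_tendsto by blast
      with unique[OF fixed[OF w]] show ?thesis
        by simp
    qed
  qed
qed

locale F_contraction =
  fixes T :: "'a::metric_space \<Rightarrow> 'a" and F :: "real \<Rightarrow> real" and \<alpha> :: real
  assumes alpha_nonneg: "0 \<le> \<alpha>" and alpha_less_one: "\<alpha> < 1"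
    and F_mono: "mono_on {0<..} F"
    and F_pos: "\<And>s. 0 < s \<Longrightarrow> 0 < F s"
    and F_contract: "\<And>x y. T x \<noteq> T y \<Longrightarrow> F (dist (T x) (T y)) \<le> \<alpha> * F (dist x y)"
begin

lemma F_dist_funpow_le:
  "(T ^^ n) x \<noteq> (T ^^ n) y \<Longrightarrow> F (dist ((T ^^ n) x) ((T ^^ n) y)) \<le> \<alpha> ^ n * F (dist x y)"
proof (induction n)
  case (Suc n)
  then have "(T ^^ n) x \<noteq> (T ^^ n) y"
    by auto
  have "F (dist ((T ^^ Suc n) x) ((T ^^ Suc n) y)) \<le> \<alpha> * F (dist ((T ^^ n) x) ((T ^^ n) y))"
    using F_contract Suc.prems by simp
  also have "\<dots> \<le> \<alpha> * (\<alpha> ^ n * F (dist x y))"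
    using Suc.IH[OF \<open>(T ^^ n) x \<noteq> (T ^^ n) y\<close>] alpha_nonneg by (rule mult_left_mono)
  finally show ?case
    by simp
qed simp

lemma dist_less_if_F_less:
  assumes "0 < e" and "F (dist p q) < F e"
  shows "dist p q < e"
proof (rule ccontr)
  assume "\<not> dist p q < e"
  then have "F e \<le> F (dist p q)"
    using \<open>0 < e\<close> by (intro mono_onD[OF F_mono]) auto
  with assms(2) show False
    by simp
qed

lemma nonexpansive: "dist (T x) (T y) \<le> dist x y"
proof (cases "T x = T y")
  case False
  then have "F (dist (T x) (T y)) \<le> \<alpha> * F (dist x y)"
    by (rule F_contract)
  also have "\<dots> < 1 * F (dist x y)"
    using F_pos[of "dist x y"] False alpha_less_one by (intro mult_strict_right_mono) auto
  finally show ?thesis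
    using False by (intro less_imp_le dist_less_if_F_less) auto
qed simp

lemma continuous_on: "continuous_on UNIV T"
  by (rule lipschitz_on_continuous_on[of 1]) (simp add: lipschitz_on_def nonexpansive)

lemma uniformly_asymptotically_contractive: "uniformly_asymptotically_contractive T"
  unfolding uniformly_asymptotically_contractive_def
proof (intro allI impI)
  fix B e :: real
  assume "0 < e"
  have "(\<lambda>n. \<alpha> ^ n * F B) \<longlonglongrightarrow> 0"
    using alpha_nonneg alpha_less_one by (intro tendsto_mult_left_zero LIMSEQ_power_zero) auto
  then have "\<forall>\<^sub>F n in sequentially. \<alpha> ^ n * F B < F e"
    using F_pos[OF \<open>0 < e\<close>] by (rule order_tendstoD)
  then show "\<forall>\<^sub>F n in sequentially. \<forall>p q. dist p q \<le> B \<longrightarrow> dist ((T ^^ n) p) ((T ^^ n) q) < e"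
  proof eventually_elim
    case (elim n)
    show ?case
    proof (intro allI impI)
      fix p q :: 'a
      assume "dist p q \<le> B"
      show "dist ((T ^^ n) p) ((T ^^ n) q) < e"
      proof (cases "(T ^^ n) p = (T ^^ n) q")
        case False
        then have "0 < dist p q"
          by auto
        moreover from this have "0 < B"
          using \<open>dist p q \<le> B\<close> by linarith
        ultimately have "F (dist p q) \<le> F B"
          using \<open>dist p q \<le> B\<close> by (intro mono_onD[OF F_mono]) auto
        then have "F (dist ((T ^^ n) p) ((T ^^ n) q)) \<le> \<alpha> ^ n * F B"
          using F_dist_funpow_le[OF False] alpha_nonneg
          by (meson order_trans mult_left_mono zero_le_power)
        then show ?thesis
          using elim \<open>0 < e\<close> by (intro dist_less_if_F_less) auto
      qed (use \<open>0 < e\<close> in simp)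
    qed
  qed
qed

end

theorem mainTheorem10:
  fixes T :: "'a::{metric_space, complete_space} \<Rightarrow> 'a"
    and F :: "real \<Rightarrow> real"
    and \<alpha> :: real
  assumes "0 \<le> \<alpha>" and "\<alpha> < 1"
    and "mono_on {0<..} F"
    and "\<And>s. s > 0 \<Longrightarrow> F s > 0"
    and "\<And>x y. T x \<noteq> T y \<Longrightarrow> F (dist (T x) (T y)) \<le> \<alpha> * F (dist x y)"
  shows "picard_operator T"
proof -
  interpret F_contraction T F \<alpha>
    using assms by unfold_locales auto
  show ?thesis
    using picard_operator_if_uniformly_asymptotically_contractive
      continuous_on uniformly_asymptotically_contractive .
qed

end
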